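(* Let $\Phi$ be the closure $cl(\varphi_0)$ of a formula, $M^*$ the canonical model for $\Phi$, and $\Gamma,\Delta\in W^*$. If the formula $\bigwedge\Gamma\wedge\neg[\approx]_iI_i\neg\bigwedge\Delta$ is consistent (i.e. its negation is not provable in $\mathbf{AIL}$), then $(\Gamma,\Delta)\in\sim_i^*\circ\approx_i^*$.
   Context: $\mathcal{L}_{AIL}$: $\varphi::=p\mid\neg\varphi\mid\varphi\wedge\varphi\mid A_i\varphi\mid I_i\varphi\mid E_i\varphi\mid[\approx]_i\varphi\mid[\circ^+]_i\varphi$ (countable atoms, finite agent set). Hilbert system $\mathbf{AIL}$: axioms — propositional tautologies; $A_i\varphi\leftrightarrow A_i\neg\varphi$; $A_i(\varphi\wedge\psi)\leftrightarrow A_i\varphi\wedge A_i\psi$; $A_i\varphi\leftrightarrow A_iO_j\varphi$ for $O_j\in\{A_j,I_j,[\approx]_j,[\circ^+]_j,E_j\}$; $A_i\varphi\to I_iA_i\varphi$; $\neg A_i\varphi\to I_i\neg A_i\varphi$; $A_ip\wedge p\to[\approx]_ip$; for $\Box\in\{I_i,[\approx]_i\}$: $\Box(\varphi\to\psi)\to(\Box\varphi\to\Box\psi)$, $\Box\varphi\to\varphi$, $\neg\Box\varphi\to\Box\neg\Box\varphi$; $[\circ^+]_i(\varphi\to\psi)\to([\circ^+]_i\varphi\to[\circ^+]_i\psi)$; $[\circ^+]_i\varphi\to\varphi\wedge[\approx]_iI_i[\circ^+]_i\varphi$; $[\circ^+]_i(\varphi\to[\approx]_iI_i\varphi)\to(\varphi\to[\circ^+]_i\varphi)$;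 $E_i\varphi\leftrightarrow A_i\varphi\wedge[\circ^+]_i\varphi$; rules: modus ponens, necessitation for $I_i,[\approx]_i,[\circ^+]_i$. $\Gamma\vdash\varphi$ iff $\vdash\bigwedge\Gamma'\to\varphi$ for some finite $\Gamma'\subseteq\Gamma$. $cl(\varphi_0)$ is the smallest (finite) set containing $\varphi_0$ closed under: subformulas; $\neg\psi$ for non-negations $\psi$; $A_i\psi\Rightarrow A_i\chi$ for subformulas $\chi$ of $\psi$; $A_i\psi\Rightarrow I_iA_i\psi,I_i\neg A_i\psi,[\approx]_ip$ for atoms $p$ in $\psi$; $I_i\psi\Rightarrow I_iI_i\psi,I_i\neg I_i\psi$ unless $\psi$ is $I_i\chi$ or $\neg I_i\chi$; analogously for $[\approx]_i$; $[\circ^+]_i\psi\Rightarrow[\approx]_iI_i[\circ^+]_i\psi$; $E_i\psi\Rightarrow A_i\psi,[\circ^+]_i\psi$. $W^*$ is the set of maximal consistent sets in $\Phi$ (subsets $\Gamma\subseteq\Phi$ with $\Gamma\nvdash\bot$ not properly extendable within $\Phi$); $\bigwedge\Gamma$ is the conjunction of the (finitely many) elements of $\Gamma$. $(\Gamma,\Delta)\in\sim_i^*$ iff $\{\psi:I_i\psi\in\Gamma\}\subseteq\Delta$; $(\Gamma,\Delta)\in\approx_i^*$ iff $\{\psi:[\approx]_i\psi\in\Gamma\}\subseteq\Delta$; $\sim_i^*\circ\approx_i^*=\{(\Gamma,\Delta):\exists\Theta\in W^*\,((\Gamma,\Theta)\in\approx_i^*,(\Theta,\Delta)\in\sim_i^*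 )\}$. *)

theory Defs
  imports Main "HOL-Library.Countable"
begin

text \<open>Atoms of type 'p (countable), agents of type 'i (finite).
  Aw i = A_i (awareness), Ik i = I_i (implicit knowledge), Ek i = E_i (explicit knowledge),
  Ind i = [\<approx>]_i, Cl i = [\<circ>+]_i.\<close>

datatype ('p, 'i) fm =
    Atom 'p
  | Neg "('p, 'i) fm"
  | Conj "('p, 'i) fm" "('p, 'i) fm"
  | Aw 'i "('p, 'i) fm"
  | Ik 'i "('p, 'i) fm"
  | Ek 'i "('p, 'i) fm"
  | Ind 'i "('p, 'i) fm"
  | Cl 'i "('p, 'i) fm"

abbreviation Disj :: "('p,'i) fm \<Rightarrow> ('p,'i) fm \<Rightarrow> ('p,'i) fm" where
  "Disj a b \<equiv> Neg (Conj (Neg a) (Neg b))"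

abbreviation Imp :: "('p,'i) fm \<Rightarrow> ('p,'i) fm \<Rightarrow> ('p,'i) fm" where
  "Imp a b \<equiv> Neg (Conj a (Neg b))"

abbreviation Iff :: "('p,'i) fm \<Rightarrow> ('p,'i) fm \<Rightarrow> ('p,'i) fm" where
  "Iff a b \<equiv> Conj (Imp a b) (Imp b a)"

definition Bot :: "('p,'i) fm" where
  "Bot = Conj (Atom undefined) (Neg (Atom undefined))"

definition Top :: "('p,'i) fm" where
  "Top = Neg Bot"

text \<open>Propositional evaluation: all non-boolean formulas (atoms and modal formulas)
  are treated as propositional letters.\<close>
fun peval :: "(('p,'i) fm \<Rightarrow> bool) \<Rightarrow> ('p,'i) fm \<Rightarrow> bool" where
  "peval v (Neg a) = (\<not> peval v a)"
| "peval v (Conj a b) = (peval v a \<and> peval v b)"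
| "peval v f = v f"

definition tautology :: "('p,'i) fm \<Rightarrow> bool" where
  "tautology f \<longleftrightarrow> (\<forall>v. peval v f)"

inductive AIL :: "('p,'i) fm \<Rightarrow> bool" where
  taut: "tautology f \<Longrightarrow> AIL f"
| aw_neg: "AIL (Iff (Aw i f) (Aw i (Neg f)))"
| aw_conj: "AIL (Iff (Aw i (Conj f g)) (Conj (Aw i f) (Aw i g)))"
| aw_Aw: "AIL (Iff (Aw i f) (Aw i (Aw j f)))"
| aw_Ik: "AIL (Iff (Aw i f) (Aw i (Ik j f)))"
| aw_Ind: "AIL (Iff (Aw i f) (Aw i (Ind j f)))"
| aw_Cl: "AIL (Iff (Aw i f) (Aw i (Cl j f)))"
| aw_Ek: "AIL (Iff (Aw i f) (Aw i (Ek j f)))"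
| aw_intro: "AIL (Imp (Aw i f) (Ik i (Aw i f)))"
| naw_intro: "AIL (Imp (Neg (Aw i f)) (Ik i (Neg (Aw i f))))"
| aw_atom_ind: "AIL (Imp (Conj (Aw i (Atom p)) (Atom p)) (Ind i (Atom p)))"
| K_Ik: "AIL (Imp (Ik i (Imp f g)) (Imp (Ik i f) (Ik i g)))"
| T_Ik: "AIL (Imp (Ik i f) f)"
| B5_Ik: "AIL (Imp (Neg (Ik i f)) (Ik i (Neg (Ik i f))))"
| K_Ind: "AIL (Imp (Ind i (Imp f g)) (Imp (Ind i f) (Ind i g)))"
| T_Ind: "AIL (Imp (Ind i f) f)"
| B5_Ind: "AIL (Imp (Neg (Ind i f)) (Ind i (Neg (Ind i f))))"
| K_Cl: "AIL (Imp (Cl i (Imp f g)) (Imp (Cl i f) (Cl i g)))"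
| mix_Cl: "AIL (Imp (Cl i f) (Conj f (Ind i (Ik i (Cl i f)))))"
| ind_Cl: "AIL (Imp (Cl i (Imp f (Ind i (Ik i f)))) (Imp f (Cl i f)))"
| def_Ek: "AIL (Iff (Ek i f) (Conj (Aw i f) (Cl i f)))"
| mp: "AIL (Imp f g) \<Longrightarrow> AIL f \<Longrightarrow> AIL g"
| nec_Ik: "AIL f \<Longrightarrow> AIL (Ik i f)"
| nec_Ind: "AIL f \<Longrightarrow> AIL (Ind i f)"
| nec_Cl: "AIL f \<Longrightarrow> AIL (Cl i f)"

fun conj_list :: "('p,'i) fm list \<Rightarrow> ('p,'i) fm" where
  "conj_list [] = Top"
| "conj_list [f] = f"
| "conj_list (f # fs) = Conj f (conj_list fs)"

definition bigconj :: "('p,'i) fm set \<Rightarrow> ('p,'i) fm" where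
  "bigconj G = conj_list (SOME L. set L = G \<and> distinct L)"

definition derives :: "('p,'i) fm set \<Rightarrow> ('p,'i) fm \<Rightarrow> bool" where
  "derives G f \<longleftrightarrow> (\<exists>G'. finite G' \<and> G' \<subseteq> G \<and> AIL (Imp (bigconj G') f))"

definition consistent :: "('p,'i) fm set \<Rightarrow> bool" where
  "consistent G \<longleftrightarrow> \<not> derives G Bot"

fun sub :: "('p,'i) fm \<Rightarrow> ('p,'i) fm set" where
  "sub (Atom p) = {Atom p}"
| "sub (Neg f) = insert (Neg f) (sub f)"
| "sub (Conj f g) = insert (Conj f g) (sub f \<union> sub g)"
| "sub (Aw i f) = insert (Aw i f) (sub f)"
| "sub (Ik i f) = insert (Ik i f) (sub f)"
| "sub (Ek i f) = insert (Ek i f) (sub f)"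
| "sub (Ind i f) = insert (Ind i f) (sub f)"
| "sub (Cl i f) = insert (Cl i f) (sub f)"

fun atoms :: "('p,'i) fm \<Rightarrow> 'p set" where
  "atoms (Atom p) = {p}"
| "atoms (Neg f) = atoms f"
| "atoms (Conj f g) = atoms f \<union> atoms g"
| "atoms (Aw i f) = atoms f"
| "atoms (Ik i f) = atoms f"
| "atoms (Ek i f) = atoms f"
| "atoms (Ind i f) = atoms f"
| "atoms (Cl i f) = atoms f"

fun is_neg :: "('p,'i) fm \<Rightarrow> bool" where
  "is_neg (Neg f) = True"
| "is_neg _ = False"

inductive_set cl :: "('p,'i) fm \<Rightarrow> ('p,'i) fm set" for f0 :: "('p,'i) fm" where
  base: "f0 \<in> cl f0"
| subf: "f \<in> cl f0 \<Longrightarrow> g \<in> sub f \<Longrightarrow> g \<in> cl f0"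
| neg: "f \<in> cl f0 \<Longrightarrow> \<not> is_neg f \<Longrightarrow> Neg f \<in> cl f0"
| aw_sub: "Aw i f \<in> cl f0 \<Longrightarrow> g \<in> sub f \<Longrightarrow> Aw i g \<in> cl f0"
| aw_ik: "Aw i f \<in> cl f0 \<Longrightarrow> Ik i (Aw i f) \<in> cl f0"
| aw_ikn: "Aw i f \<in> cl f0 \<Longrightarrow> Ik i (Neg (Aw i f)) \<in> cl f0"
| aw_ind: "Aw i f \<in> cl f0 \<Longrightarrow> p \<in> atoms f \<Longrightarrow> Ind i (Atom p) \<in> cl f0"
| ik_ik: "Ik i f \<in> cl f0 \<Longrightarrow> \<not> (\<exists>g. f = Ik i g \<or> f = Neg (Ik i g))
          \<Longrightarrow> Ik i (Ik i f) \<in> cl f0"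
| ik_ikn: "Ik i f \<in> cl f0 \<Longrightarrow> \<not> (\<exists>g. f = Ik i g \<or> f = Neg (Ik i g))
          \<Longrightarrow> Ik i (Neg (Ik i f)) \<in> cl f0"
| ind_ind: "Ind i f \<in> cl f0 \<Longrightarrow> \<not> (\<exists>g. f = Ind i g \<or> f = Neg (Ind i g))
          \<Longrightarrow> Ind i (Ind i f) \<in> cl f0"
| ind_indn: "Ind i f \<in> cl f0 \<Longrightarrow> \<not> (\<exists>g. f = Ind i g \<or> f = Neg (Ind i g))
          \<Longrightarrow> Ind i (Neg (Ind i f)) \<in> cl f0"
| cl_ind: "Cl i f \<in> cl f0 \<Longrightarrow> Ind i (Ik i (Cl i f)) \<in> cl f0"
| ek_aw: "Ek i f \<in> cl f0 \<Longrightarrow> Aw i f \<in> cl f0"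
| ek_cl: "Ek i f \<in> cl f0 \<Longrightarrow> Cl i f \<in> cl f0"

definition Wstar :: "('p,'i) fm set \<Rightarrow> ('p,'i) fm set set" where
  "Wstar Phi = {G. G \<subseteq> Phi \<and> consistent G \<and>
                   (\<forall>G'. G \<subset> G' \<and> G' \<subseteq> Phi \<longrightarrow> \<not> consistent G')}"

definition sim_star :: "('p,'i) fm set \<Rightarrow> 'i \<Rightarrow> (('p,'i) fm set \<times> ('p,'i) fm set) set" where
  "sim_star Phi i = {(G, D). G \<in> Wstar Phi \<and> D \<in> Wstar Phi \<and> {f. Ik i f \<in> G} \<subseteq> D}"

definition ind_star :: "('p,'i) fm set \<Rightarrow> 'i \<Rightarrow> (('p,'i) fm set \<times> ('p,'i) fm set) set" where
  "ind_star Phi i = {(G, D). G \<in> Wstar Phi \<and> D \<in> Wstar Phi \<and> {f. Ind i f \<in> G} \<subseteq> D}"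

text \<open>sim_i* \<circ> ind_i*: first an ind step, then a sim step.\<close>
definition comp_star :: "('p,'i) fm set \<Rightarrow> 'i \<Rightarrow> (('p,'i) fm set \<times> ('p,'i) fm set) set" where
  "comp_star Phi i = {(G, D). \<exists>T \<in> Wstar Phi. (G, T) \<in> ind_star Phi i \<and> (T, D) \<in> sim_star Phi i}"

end

theory Submission
  imports Defs
begin

text \<open>Let A = {\<psi>. [\<approx>]_i\<psi> \<in> \<Gamma>} and N = {\<psi>. I_i\<psi> \<in> \<Phi>, \<psi> \<notin> \<Delta>}. A maximal consistent
  extension \<Theta> of A \<union> {\<not>I_i\<psi>. \<psi> \<in> N} is \<approx>-related to \<Gamma>, and \<sim>-related to \<Delta> because it
  contains \<not>I_i\<psi> for every \<psi> \<in> N. That set is consistent: otherwise \<And>A implies the disjunction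
  of the I_i\<psi> with \<psi> \<in> N; by maximality of \<Delta> each such \<psi> implies \<not>\<And>\<Delta>, so \<And>A implies
  I_i\<not>\<And>\<Delta>, and normality of [\<approx>]_i gives \<turnstile> \<And>\<Gamma> \<rightarrow> [\<approx>]_iI_i\<not>\<And>\<Delta>, contradicting the
  hypothesis. Finite conjunctions and the Lindenbaum construction need \<Phi> = cl(\<phi>0) to be finite:
  every formula of the closure is obtained from a formula no larger than \<phi>0, with no new atoms,
  by adding a bounded number of unary operators.\<close>

section \<open>Finiteness of the closure\<close>

lemma sub_refl: "f \<in> sub f"
  by (cases f) auto

lemma size_sub: "g \<in> sub f \<Longrightarrow> size g \<le> size f"
  by (induction f) auto

lemma atoms_sub: "g \<in> sub f \<Longrightarrow> atoms g \<subseteq> atoms f"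
  by (induction f) auto

lemma Atom_in_sub: "p \<in> atoms f \<Longrightarrow> Atom p \<in> sub f"
  by (induction f) auto

lemma finite_atoms: "finite (atoms f)"
  by (induction f) auto

definition sub_closed :: "('p,'i) fm set \<Rightarrow> bool" where
  "sub_closed X \<longleftrightarrow> (\<forall>f\<in>X. sub f \<subseteq> X)"

definition bounded_fms :: "nat \<Rightarrow> 'p set \<Rightarrow> ('p,'i) fm set" where
  "bounded_fms n P = {f. size f \<le> n \<and> atoms f \<subseteq> P}"

lemma finite_bounded_fms:
  assumes "finite P"
  shows "finite (bounded_fms n P :: ('p,'i::finite) fm set)"
proof (induction n)
  case 0
  have "bounded_fms 0 P \<subseteq> (Atom ` P :: ('p,'i) fm set)"
  proof
    fix f :: "('p,'i) fm"
    assume "f \<in> bounded_fms 0 P"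
    then show "f \<in> Atom ` P"
      by (cases f) (auto simp: bounded_fms_def)
  qed
  then show ?case
    using assms finite_subset by blast
next
  case (Suc n)
  let ?B = "bounded_fms n P :: ('p,'i) fm set"
  have "bounded_fms (Suc n) P \<subseteq> Atom ` P \<union> Neg ` ?B \<union> case_prod Conj ` (?B \<times> ?B)
      \<union> (\<Union>i. Aw i ` ?B \<union> Ik i ` ?B \<union> Ek i ` ?B \<union> Ind i ` ?B \<union> Cl i ` ?B)" (is "_ \<subseteq> ?U")
  proof
    fix f :: "('p,'i) fm"
    assume "f \<in> bounded_fms (Suc n) P"
    then show "f \<in> ?U"
      by (cases f) (auto simp: bounded_fms_def)
  qed
  moreover have "finite ?U"
    using Suc assms by simp
  ultimately show ?case
    by (rule finite_subset)
qed

lemma sub_closed_bounded_fms: "sub_closed (bounded_fms n P)"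
  unfolding sub_closed_def bounded_fms_def
  using size_sub atoms_sub by fastforce

definition with_negs :: "('p,'i) fm set \<Rightarrow> ('p,'i) fm set" where
  "with_negs X = X \<union> Neg ` X"

definition awareness_layer :: "('p,'i) fm set \<Rightarrow> ('p,'i) fm set" where
  "awareness_layer B = with_negs B \<union> (\<Union>i. Ik i ` with_negs B \<union> Ind i ` Ik i ` B)"

definition introspection_layer :: "('p,'i) fm set \<Rightarrow> ('p,'i) fm set" where
  "introspection_layer L = with_negs L \<union>
     (\<Union>i. Ik i ` with_negs (L \<inter> range (Ik i)) \<union> Ind i ` with_negs (L \<inter> range (Ind i)))"

definition cl_bound :: "('p,'i) fm \<Rightarrow> ('p,'i) fm set" where
  "cl_bound f0 = with_negs (introspection_layer (awareness_layer (bounded_fms (size f0) (atoms f0))))"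

lemma finite_with_negs: "finite X \<Longrightarrow> finite (with_negs X)"
  by (simp add: with_negs_def)

lemma finite_awareness_layer: "finite B \<Longrightarrow> finite (awareness_layer (B :: ('p,'i::finite) fm set))"
  by (simp add: awareness_layer_def finite_with_negs)

lemma finite_introspection_layer:
  "finite L \<Longrightarrow> finite (introspection_layer (L :: ('p,'i::finite) fm set))"
  by (simp add: introspection_layer_def finite_with_negs)

lemma finite_cl_bound: "finite (cl_bound (f0 :: ('p,'i::finite) fm))"
  unfolding cl_bound_def
  by (intro finite_with_negs finite_introspection_layer finite_awareness_layer
      finite_bounded_fms finite_atoms)

lemma sub_closed_with_negs: "sub_closed X \<Longrightarrow> sub_closed (with_negs X)"
  unfolding sub_closed_def with_negs_def by fastforce

lemma sub_closed_awareness_layer: "sub_closed B \<Longrightarrow> sub_closed (awareness_layer B)"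
  unfolding sub_closed_def awareness_layer_def with_negs_def by (auto 0 4)

lemma sub_closed_introspection_layer: "sub_closed L \<Longrightarrow> sub_closed (introspection_layer L)"
  unfolding sub_closed_def introspection_layer_def with_negs_def by (auto 0 4)

lemma sub_closed_cl_bound: "sub_closed (cl_bound f0)"
  unfolding cl_bound_def
  by (intro sub_closed_with_negs sub_closed_introspection_layer sub_closed_awareness_layer
      sub_closed_bounded_fms)

lemma bounded_fms_Aw_sub:
  "Aw i f \<in> bounded_fms n P \<Longrightarrow> g \<in> sub f \<Longrightarrow> Aw i g \<in> bounded_fms n P"
  using size_sub atoms_sub by (fastforce simp: bounded_fms_def)

lemma bounded_fms_Ind_Atom:
  "Aw i f \<in> bounded_fms n P \<Longrightarrow> p \<in> atoms f \<Longrightarrow> Ind i (Atom p) \<in> bounded_fms n P"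
  using size_sub[OF Atom_in_sub] by (fastforce simp: bounded_fms_def)

lemma bounded_fms_EkD:
  "Ek i f \<in> bounded_fms n P \<Longrightarrow> Aw i f \<in> bounded_fms n P \<and> Cl i f \<in> bounded_fms n P"
  by (simp add: bounded_fms_def)

lemma subset_with_negs: "X \<subseteq> with_negs X"
  by (simp add: with_negs_def)

lemma with_negs_NegI: "f \<in> with_negs X \<Longrightarrow> \<not> is_neg f \<Longrightarrow> Neg f \<in> with_negs X"
  by (auto simp: with_negs_def)

lemma subset_awareness_layer: "B \<subseteq> awareness_layer B"
  unfolding awareness_layer_def with_negs_def by blast

lemma awareness_layerI:
  "f \<in> B \<Longrightarrow> Ik i f \<in> awareness_layer B \<and> Ik i (Neg f) \<in> awareness_layer B \<and> Ind i (Ik i f) \<in> awareness_layer B"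
  unfolding awareness_layer_def with_negs_def by blast

lemma subset_introspection_layer: "L \<subseteq> introspection_layer L"
  unfolding introspection_layer_def with_negs_def by blast

lemma introspection_layer_IkI:
  assumes "Ik i f \<in> L"
  shows "Ik i (Ik i f) \<in> introspection_layer L \<and> Ik i (Neg (Ik i f)) \<in> introspection_layer L"
proof -
  have "{Ik i f, Neg (Ik i f)} \<subseteq> with_negs (L \<inter> range (Ik i))"
    using assms by (auto simp: with_negs_def)
  then show ?thesis
    unfolding introspection_layer_def by blast
qed

lemma introspection_layer_IndI:
  assumes "Ind i f \<in> L"
  shows "Ind i (Ind i f) \<in> introspection_layer L \<and> Ind i (Neg (Ind i f)) \<in> introspection_layer L"
proof -
  have "{Ind i f, Neg (Ind i f)} \<subseteq> with_negs (L \<inter> range (Ind i))"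
    using assms by (auto simp: with_negs_def)
  then show ?thesis
    unfolding introspection_layer_def by blast
qed

lemma cl_bound_AwD: "Aw i f \<in> cl_bound f0 \<Longrightarrow> Aw i f \<in> bounded_fms (size f0) (atoms f0)"
  by (auto simp: cl_bound_def introspection_layer_def awareness_layer_def with_negs_def)

lemma cl_bound_ClD: "Cl i f \<in> cl_bound f0 \<Longrightarrow> Cl i f \<in> bounded_fms (size f0) (atoms f0)"
  by (auto simp: cl_bound_def introspection_layer_def awareness_layer_def with_negs_def)

lemma cl_bound_EkD: "Ek i f \<in> cl_bound f0 \<Longrightarrow> Ek i f \<in> bounded_fms (size f0) (atoms f0)"
  by (auto simp: cl_bound_def introspection_layer_def awareness_layer_def with_negs_def)

text \<open>The side conditions of the introspection rules of cl keep the closure finite: only formulas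
  of the awareness layer are ever introspected, so a single introspection layer suffices.\<close>

lemma cl_bound_IkD:
  assumes "Ik i f \<in> cl_bound f0" and "\<not> (\<exists>g. f = Ik i g \<or> f = Neg (Ik i g))"
  shows "Ik i f \<in> awareness_layer (bounded_fms (size f0) (atoms f0))"
  using assms by (auto simp: cl_bound_def introspection_layer_def with_negs_def)

lemma cl_bound_IndD:
  assumes "Ind i f \<in> cl_bound f0" and "\<not> (\<exists>g. f = Ind i g \<or> f = Neg (Ind i g))"
  shows "Ind i f \<in> awareness_layer (bounded_fms (size f0) (atoms f0))"
  using assms by (auto simp: cl_bound_def introspection_layer_def with_negs_def awareness_layer_def)

lemma cl_subset_cl_bound: "cl f0 \<subseteq> cl_bound f0"
proof
  let ?B = "bounded_fms (size f0) (atoms f0)"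
  let ?L = "introspection_layer (awareness_layer ?B)"
  have bound_def: "cl_bound f0 = with_negs ?L"
    by (simp add: cl_bound_def)
  have L_sub: "?L \<subseteq> cl_bound f0"
    unfolding bound_def by (rule subset_with_negs)
  have aw_sub: "awareness_layer ?B \<subseteq> cl_bound f0"
    using subset_introspection_layer L_sub by blast
  have B_sub: "?B \<subseteq> cl_bound f0"
    using subset_awareness_layer aw_sub by blast
  fix f
  assume "f \<in> cl f0"
  then show "f \<in> cl_bound f0"
  proof (induction rule: cl.induct)
    case base
    have "f0 \<in> ?B"
      by (simp add: bounded_fms_def)
    with B_sub show ?case
      by blast
  next
    case (subf f g)
    then show ?case
      using sub_closed_cl_bound by (auto simp: sub_closed_def)
  next
    case (neg f)
    from neg.IH neg.hyps(2) show ?case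
      unfolding bound_def by (rule with_negs_NegI)
  next
    case (aw_sub i f g)
    from aw_sub.IH have "Aw i f \<in> ?B"
      by (rule cl_bound_AwD)
    with B_sub aw_sub.hyps(2) show ?case
      by (blast dest: bounded_fms_Aw_sub)
  next
    case (aw_ik i f)
    from aw_ik.IH have "Aw i f \<in> ?B"
      by (rule cl_bound_AwD)
    with aw_sub show ?case
      by (blast dest: awareness_layerI)
  next
    case (aw_ikn i f)
    from aw_ikn.IH have "Aw i f \<in> ?B"
      by (rule cl_bound_AwD)
    with aw_sub show ?case
      by (blast dest: awareness_layerI)
  next
    case (aw_ind i f p)
    from aw_ind.IH have "Aw i f \<in> ?B"
      by (rule cl_bound_AwD)
    with B_sub aw_ind.hyps(2) show ?case
      by (blast dest: bounded_fms_Ind_Atom)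
  next
    case (ik_ik i f)
    from ik_ik.IH ik_ik.hyps(2) have "Ik i f \<in> awareness_layer ?B"
      by (rule cl_bound_IkD)
    with L_sub show ?case
      by (blast dest: introspection_layer_IkI)
  next
    case (ik_ikn i f)
    from ik_ikn.IH ik_ikn.hyps(2) have "Ik i f \<in> awareness_layer ?B"
      by (rule cl_bound_IkD)
    with L_sub show ?case
      by (blast dest: introspection_layer_IkI)
  next
    case (ind_ind i f)
    from ind_ind.IH ind_ind.hyps(2) have "Ind i f \<in> awareness_layer ?B"
      by (rule cl_bound_IndD)
    with L_sub show ?case
      by (blast dest: introspection_layer_IndI)
  next
    case (ind_indn i f)
    from ind_indn.IH ind_indn.hyps(2) have "Ind i f \<in> awareness_layer ?B"
      by (rule cl_bound_IndD)
    with L_sub show ?case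
      by (blast dest: introspection_layer_IndI)
  next
    case (cl_ind i f)
    from cl_ind.IH have "Cl i f \<in> ?B"
      by (rule cl_bound_ClD)
    with aw_sub show ?case
      by (blast dest: awareness_layerI)
  next
    case (ek_aw i f)
    from ek_aw.IH have "Ek i f \<in> ?B"
      by (rule cl_bound_EkD)
    with B_sub show ?case
      by (blast dest: bounded_fms_EkD)
  next
    case (ek_cl i f)
    from ek_cl.IH have "Ek i f \<in> ?B"
      by (rule cl_bound_EkD)
    with B_sub show ?case
      by (blast dest: bounded_fms_EkD)
  qed
qed

lemma sub_closed_cl: "sub_closed (cl f0)"
  unfolding sub_closed_def by (blast intro: cl.subf)

lemma finite_cl: "finite (cl (f0 :: ('p,'i::finite) fm))"
  using finite_cl_bound cl_subset_cl_bound by (rule finite_subset[rotated])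

section \<open>Propositional reasoning and normal modalities\<close>

lemma peval_Bot [simp]: "peval v Bot = False"
  by (simp add: Bot_def)

lemma peval_Top [simp]: "peval v Top = True"
  by (simp add: Top_def)

lemma peval_conj_list: "peval v (conj_list L) = (\<forall>f\<in>set L. peval v f)"
  by (induction L rule: conj_list.induct) auto

lemma bigconj_eq_conj_list:
  assumes "finite S"
  obtains L where "set L = S" and "bigconj S = conj_list L"
  using someI_ex[OF finite_distinct_list[OF assms]] by (auto simp: bigconj_def)

lemma peval_bigconj: "finite S \<Longrightarrow> peval v (bigconj S) = (\<forall>f\<in>S. peval v f)"
  by (metis bigconj_eq_conj_list peval_conj_list)

lemma AIL_conj_list: "\<forall>f\<in>set L. AIL f \<Longrightarrow> AIL (conj_list L)"
proof (induction L rule: conj_list.induct)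
  case 1
  show ?case
    by (rule AIL.taut) (simp add: tautology_def)
next
  case (3 f g fs)
  have "AIL (Imp f (Imp (conj_list (g # fs)) (conj_list (f # g # fs))))"
    by (rule AIL.taut) (simp add: tautology_def)
  with 3 show ?case
    by (auto intro: AIL.mp)
qed simp

lemma AIL_bigconj: "finite S \<Longrightarrow> \<forall>f\<in>S. AIL f \<Longrightarrow> AIL (bigconj S)"
  by (metis bigconj_eq_conj_list AIL_conj_list)

lemma AIL_prop_consequence:
  assumes "finite P" and "\<forall>p\<in>P. AIL p" and "\<And>v. \<forall>p\<in>P. peval v p \<Longrightarrow> peval v f"
  shows "AIL f"
proof (rule AIL.mp)
  show "AIL (Imp (bigconj P) f)"
    using assms(1,3) by (intro AIL.taut) (simp add: tautology_def peval_bigconj, blast)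
  show "AIL (bigconj P)"
    using assms(1,2) by (rule AIL_bigconj)
qed

lemma AIL_prop_consequence1:
  "AIL a \<Longrightarrow> (\<And>v. peval v a \<Longrightarrow> peval v b) \<Longrightarrow> AIL b"
  by (rule AIL_prop_consequence[of "{a}"]) auto

lemma AIL_prop_consequence2:
  "AIL a \<Longrightarrow> AIL b \<Longrightarrow> (\<And>v. peval v a \<Longrightarrow> peval v b \<Longrightarrow> peval v c) \<Longrightarrow> AIL c"
  by (rule AIL_prop_consequence[of "{a, b}"]) auto

lemma AIL_bigconj_antimono:
  assumes "finite S" and "S' \<subseteq> S"
  shows "AIL (Imp (bigconj S) (bigconj S'))"
proof -
  have "finite S'"
    using assms by (rule finite_subset[rotated])
  with assms show ?thesis
    by (intro AIL.taut) (auto simp: tautology_def peval_bigconj)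
qed

lemma AIL_imp_of_refutation:
  assumes "finite A" and "finite Bs" and "AIL (Imp (bigconj (A \<union> Neg ` Bs)) Bot)"
    and "\<forall>b\<in>Bs. AIL (Imp b d)"
  shows "AIL (Imp (bigconj A) d)"
proof (rule AIL_prop_consequence)
  let ?P = "insert (Imp (bigconj (A \<union> Neg ` Bs)) Bot) ((\<lambda>b. Imp b d) ` Bs)"
  show "finite ?P" and "\<forall>p\<in>?P. AIL p"
    using assms by auto
  fix v
  assume "\<forall>p\<in>?P. peval v p"
  then show "peval v (Imp (bigconj A) d)"
    using assms(1,2) by (auto simp: peval_bigconj)
qed

definition normal_box :: "(('p,'i) fm \<Rightarrow> ('p,'i) fm) \<Rightarrow> bool" where
  "normal_box B \<longleftrightarrow> (\<forall>f g. AIL (Imp (B (Imp f g)) (Imp (B f) (B g)))) \<and> (\<forall>f. AIL f \<longrightarrow> AIL (B f))"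

lemma normal_box_Ik: "normal_box (Ik i)"
  by (simp add: normal_box_def AIL.K_Ik AIL.nec_Ik)

lemma normal_box_Ind: "normal_box (Ind i)"
  by (simp add: normal_box_def AIL.K_Ind AIL.nec_Ind)

lemma normal_box_mono: "normal_box B \<Longrightarrow> AIL (Imp f g) \<Longrightarrow> AIL (Imp (B f) (B g))"
  unfolding normal_box_def by (blast intro: AIL.mp)

lemma normal_box_conj:
  assumes "normal_box B"
  shows "AIL (Imp (Conj (B f) (B g)) (B (Conj f g)))"
proof -
  have "AIL (Imp (B f) (B (Imp g (Conj f g))))"
    using assms by (rule normal_box_mono) (rule AIL.taut, simp add: tautology_def)
  moreover have "AIL (Imp (B (Imp g (Conj f g))) (Imp (B g) (B (Conj f g))))"
    using assms by (simp add: normal_box_def)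
  ultimately show ?thesis
    by (rule AIL_prop_consequence2) auto
qed

lemma normal_box_conj_list:
  assumes "normal_box B"
  shows "AIL (Imp (conj_list (map B L)) (B (conj_list L)))"
proof (induction L rule: conj_list.induct)
  case 1
  have "AIL (B Top)"
    using assms by (simp add: normal_box_def AIL.taut tautology_def)
  then show ?case
    by (rule AIL_prop_consequence1) simp
next
  case (2 f)
  show ?case
    by (rule AIL.taut) (simp add: tautology_def)
next
  case (3 f g fs)
  with normal_box_conj[OF assms, of f "conj_list (g # fs)"] show ?case
    by (auto elim: AIL_prop_consequence2)
qed

lemma normal_box_bigconj:
  assumes "normal_box B" and "finite A"
  shows "AIL (Imp (bigconj (B ` A)) (B (bigconj A)))"
proof -
  obtain L where L: "set L = A" "bigconj A = conj_list L"
    using assms(2) by (rule bigconj_eq_conj_list)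
  show ?thesis
    using normal_box_conj_list[OF assms(1), of L] assms(2) L
    by (auto elim!: AIL_prop_consequence1 simp: peval_bigconj peval_conj_list)
qed

section \<open>Maximal consistent sets\<close>

lemma derives_iff_AIL: "finite S \<Longrightarrow> derives S f \<longleftrightarrow> AIL (Imp (bigconj S) f)"
proof
  assume "finite S" and "derives S f"
  then obtain S' where "S' \<subseteq> S" and S'_derives: "AIL (Imp (bigconj S') f)"
    unfolding derives_def by blast
  show "AIL (Imp (bigconj S) f)"
    using AIL_bigconj_antimono[OF \<open>finite S\<close> \<open>S' \<subseteq> S\<close>] S'_derives
    by (rule AIL_prop_consequence2) auto
qed (auto simp: derives_def)

lemma Wstar_finite: "finite Phi \<Longrightarrow> M \<in> Wstar Phi \<Longrightarrow> finite M"
  unfolding Wstar_def by (auto dest: finite_subset)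

lemma lindenbaum:
  assumes "finite Phi" and "S \<subseteq> Phi" and "consistent S"
  shows "\<exists>M \<in> Wstar Phi. S \<subseteq> M"
proof -
  define F where "F = {T. S \<subseteq> T \<and> T \<subseteq> Phi \<and> consistent T}"
  have "F \<subseteq> Pow Phi"
    unfolding F_def by blast
  then have "finite F"
    using assms(1) by (meson finite_Pow_iff finite_subset)
  moreover have "S \<in> F"
    using assms(2,3) by (simp add: F_def)
  ultimately obtain M where "M \<in> F" and maximal: "\<forall>T\<in>F. M \<subseteq> T \<longrightarrow> M = T"
    by (metis finite_has_maximal2)
  then have M: "S \<subseteq> M" "M \<subseteq> Phi" "consistent M"
    by (simp_all add: F_def)
  have "\<not> consistent T" if "M \<subset> T" and "T \<subseteq> Phi" for T
  proof
    assume "consistent T"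
    with that M have "T \<in> F"
      by (auto simp: F_def)
    with that maximal show False
      by blast
  qed
  with M have "M \<in> Wstar Phi"
    unfolding Wstar_def by blast
  with M show ?thesis
    by blast
qed

lemma Wstar_Neg_notin: "M \<in> Wstar Phi \<Longrightarrow> f \<in> M \<Longrightarrow> Neg f \<notin> M"
proof
  assume "M \<in> Wstar Phi" and "f \<in> M" and "Neg f \<in> M"
  have "AIL (Imp (bigconj {f, Neg f}) Bot)"
    by (rule AIL.taut) (simp add: tautology_def peval_bigconj)
  then have "derives M Bot"
    unfolding derives_def using \<open>f \<in> M\<close> \<open>Neg f \<in> M\<close>
    by (intro exI[of _ "{f, Neg f}"]) simp
  with \<open>M \<in> Wstar Phi\<close> show False
    by (simp add: Wstar_def consistent_def)
qed

lemma Wstar_notin_imp: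
  assumes "finite Phi" and "M \<in> Wstar Phi" and "f \<in> Phi" and "f \<notin> M"
  shows "AIL (Imp f (Neg (bigconj M)))"
proof -
  have "finite M"
    using assms(1,2) by (rule Wstar_finite)
  have "\<not> consistent (insert f M)"
    using assms(2-4) unfolding Wstar_def by blast
  with \<open>finite M\<close> have "AIL (Imp (bigconj (insert f M)) Bot)"
    by (simp add: consistent_def derives_iff_AIL)
  then show ?thesis
    by (rule AIL_prop_consequence1) (simp add: peval_bigconj \<open>finite M\<close>)
qed

definition comp_seed :: "('p,'i) fm set \<Rightarrow> 'i \<Rightarrow> ('p,'i) fm set \<Rightarrow> ('p,'i) fm set \<Rightarrow> ('p,'i) fm set" where
  "comp_seed Phi i G D = {f. Ind i f \<in> G} \<union> Neg ` Ik i ` {f. Ik i f \<in> Phi \<and> f \<notin> D}"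

lemma consistent_comp_seed:
  assumes "finite Phi" and "sub_closed Phi" and "G \<in> Wstar Phi" and "D \<in> Wstar Phi"
    and "\<not> AIL (Imp (bigconj G) (Ind i (Ik i (Neg (bigconj D)))))"
  shows "consistent (comp_seed Phi i G D)"
proof (rule ccontr)
  define A where "A = {f. Ind i f \<in> G}"
  define N where "N = {f. Ik i f \<in> Phi \<and> f \<notin> D}"
  define d where "d = Ik i (Neg (bigconj D))"
  have "finite G"
    using assms(1,3) by (rule Wstar_finite)
  then have fin_A: "finite A"
    unfolding A_def by (rule finite_vimageI[unfolded vimage_def]) (simp add: inj_def)
  have "finite {f. Ik i f \<in> Phi}"
    using assms(1) by (rule finite_vimageI[unfolded vimage_def]) (simp add: inj_def)
  then have fin_N: "finite N"
    unfolding N_def by (rule rev_finite_subset) blast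
  have seed_eq: "comp_seed Phi i G D = A \<union> Neg ` Ik i ` N"
    by (simp add: comp_seed_def A_def N_def)
  assume "\<not> consistent (comp_seed Phi i G D)"
  with fin_A fin_N have seed_refuted: "AIL (Imp (bigconj (A \<union> Neg ` Ik i ` N)) Bot)"
    by (simp add: seed_eq consistent_def derives_iff_AIL)
  have N_imp: "AIL (Imp (Ik i f) d)" if "f \<in> N" for f
  proof -
    have "f \<in> Phi"
      using that assms(2) sub_refl unfolding N_def sub_closed_def by fastforce
    with that have "AIL (Imp f (Neg (bigconj D)))"
      using assms(1,4) Wstar_notin_imp unfolding N_def by blast
    then show ?thesis
      unfolding d_def by (rule normal_box_mono[OF normal_box_Ik])
  qed
  have "AIL (Imp (bigconj A) d)"
    using N_imp by (intro AIL_imp_of_refutation[OF fin_A finite_imageI[OF fin_N] seed_refuted]) blast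
  then have "AIL (Imp (Ind i (bigconj A)) (Ind i d))"
    by (rule normal_box_mono[OF normal_box_Ind])
  moreover have "AIL (Imp (bigconj G) (Ind i (bigconj A)))"
    using AIL_bigconj_antimono[OF \<open>finite G\<close>, of "Ind i ` A"]
      normal_box_bigconj[OF normal_box_Ind fin_A, of i]
    by (rule AIL_prop_consequence2) (auto simp: A_def)
  ultimately have "AIL (Imp (bigconj G) (Ind i d))"
    by (rule AIL_prop_consequence2) auto
  with assms(5) show False
    by (simp add: d_def)
qed

lemma comp_seed_subset_cl:
  assumes "G \<subseteq> cl f0"
  shows "comp_seed (cl f0) i G D \<subseteq> cl f0"
proof
  fix f
  assume "f \<in> comp_seed (cl f0) i G D"
  then consider "Ind i f \<in> G" | g where "f = Neg (Ik i g)" and "Ik i g \<in> cl f0"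
    unfolding comp_seed_def by blast
  then show "f \<in> cl f0"
  proof cases
    case 1
    with assms have "Ind i f \<in> cl f0"
      by blast
    then show ?thesis
      by (rule cl.subf) (simp add: sub_refl)
  next
    case 2
    then show ?thesis
      by (simp add: cl.neg)
  qed
qed

lemma comp_star_if_comp_seed_subset:
  assumes "G \<in> Wstar Phi" and "D \<in> Wstar Phi" and "T \<in> Wstar Phi"
    and seed: "comp_seed Phi i G D \<subseteq> T"
  shows "(G, D) \<in> comp_star Phi i"
proof -
  have "(G, T) \<in> ind_star Phi i"
    using assms by (auto simp: ind_star_def comp_seed_def)
  moreover have "f \<in> D" if "Ik i f \<in> T" for f
  proof (rule ccontr)
    assume "f \<notin> D"
    have "Ik i f \<in> Phi"
      using that assms(3) by (auto simp: Wstar_def)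
    with \<open>f \<notin> D\<close> have "Neg (Ik i f) \<in> comp_seed Phi i G D"
      by (simp add: comp_seed_def)
    with that assms(3) seed show False
      using Wstar_Neg_notin by blast
  qed
  then have "(T, D) \<in> sim_star Phi i"
    using assms(2,3) by (auto simp: sim_star_def)
  ultimately show ?thesis
    using assms(3) by (auto simp: comp_star_def)
qed

theorem lemma10:
  fixes f0 :: "('p::countable, 'i::finite) fm" and i :: 'i
    and G D :: "('p, 'i) fm set"
  assumes "G \<in> Wstar (cl f0)" and "D \<in> Wstar (cl f0)"
    and "\<not> AIL (Neg (Conj (bigconj G) (Neg (Ind i (Ik i (Neg (bigconj D)))))))"
  shows "(G, D) \<in> comp_star (cl f0) i"
proof -
  have "comp_seed (cl f0) i G D \<subseteq> cl f0"
    using assms(1) by (intro comp_seed_subset_cl) (simp add: Wstar_def)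
  moreover have "consistent (comp_seed (cl f0) i G D)"
    using finite_cl sub_closed_cl assms by (rule consistent_comp_seed)
  ultimately obtain T where "T \<in> Wstar (cl f0)" and "comp_seed (cl f0) i G D \<subseteq> T"
    using finite_cl lindenbaum by blast
  with assms(1,2) show ?thesis
    by (rule comp_star_if_comp_seed_subset)
qed

end
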